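(* Let $\mathcal G=(G,f,h)$ be a network dynamical system of size $N$ with maximum out-degree $\Delta(G)$, satisfying Assumptions 1 and 2. Suppose that for each $i\in[N]$ there are functions $\psi_i^1,\dots,\psi_i^{s_i}:\mathbb R^N\to\mathbb R$ and nonzero coefficients $c_{i,1},\dots,c_{i,s_i}\in\mathbb R$ such that every trajectory of the system satisfies $x_i(t+1)=\sum_{l=1}^{s_i}c_{i,l}\psi_i^l(x(t))$ for all $t$; let $s_{\max}=\max_i s_i$. For each $q\in[N]$ fix a $q$-pinching initial condition with trajectory $x^q(t)$, and for each $i$ let $\Psi_i\in\mathbb R^{Ns_{\max}\times s_i}$ be the matrix whose row indexed by the pair $(q,t)$, $q\in[N]$, $t\in\{0,\dots,s_{\max}-1\}$, is $(\psi_i^1(x^q(t)),\dots,\psi_i^{s_i}(x^q(t)))$; assume $\operatorname{rank}\Psi_i=s_i$ for all $i$. Let $\phi_q\in\mathbb R^{P\times N}$, $q\in[N]$, satisfy $\delta_{2(\Delta(G)+1)^{s_{\max}}}(\phi_q)<\sqrt2-1$, and let $y^q(t)=\phi_q x^q(t)$ for $t=1,\dots,s_{\max}$. Then: (a) for every $q\in[N]$ and $t\in\{1,\dots,s_{\max}\}$, the problem $\min_{\tilde x}\|\tilde x\|_1$ subject to $\phi_q\tilde x=y^q(t)$ has the unique solution $x^q(t)$; (b) $\operatorname{supp}(x^q(1))\setminus\{q\}=L_1(q)$ for every $q$, so the adjacency matrix is uniquely determined; (c) for each $i\in[N]$, letting $b_i\in\mathbb R^{Ns_{\max}}$ be the vector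 whose entry indexed by $(q,t)$ (same ordering as the rows of $\Psi_i$) is $x_i^q(t+1)$, the linear system $\Psi_i c=b_i$ has the unique solution $c=(c_{i,1},\dots,c_{i,s_i})^T$, and it equals $\Psi_i^\dagger b_i=(\Psi_i^T\Psi_i)^{-1}\Psi_i^Tb_i$.
   Context: Let $G$ be a directed graph on vertex set $[N]=\{1,\dots,N\}$ without self-loops, with adjacency matrix $A\in\{0,1\}^{N\times N}$, where $A_{ij}=1$ if and only if $i$ receives an edge (input) from $j$; in particular $A_{ii}=0$. The out-degree of $q\in[N]$ is $d_q=\#\{i: A_{iq}=1\}$, the maximum out-degree is $\Delta(G)=\max_{q}d_q$, and the first-level set of $q$ is $L_1(q)=\{i\in[N]: A_{iq}=1\}$. The network dynamical system $\mathcal G=(G,f,h)$ is the discrete-time system $x_i(t+1)=f_i(x_i(t))+\sum_{j=1}^N A_{ij}h_{ij}(x_i(t),x_j(t))$ for $i\in[N]$, $t=0,1,2,\dots$, where $f_i:\mathbb R\to\mathbb R$ and $h_{ij}:\mathbb R\times\mathbb R\to\mathbb R$; the state vector is $x(t)=(x_1(t),\dots,x_N(t))^T$. Assumption 1: $f_i(0)=0$ for all $i\in[N]$. Assumption 2: there is $\delta>0$ such that for all $i,j\in[N]$, $h_{ij}(0,0)=0$ and $h_{ij}(0,v)\neq 0$ for every $v$ with $0<|v|<\delta$. For $q\in[N]$, a $q$-pinching initial condition is $x^q(0)$ with $x^q_i(0)=\epsilon_q\delta_{iq}$ (Kronecker delta), where $0<|\epsilon_q|<\delta$; $x^q(t)$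 denotes the resulting trajectory. For $x\in\mathbb R^N$, $\operatorname{supp}(x)=\{i: x_i\neq0\}$ and $\|x\|_0=\#\operatorname{supp}(x)$; $x$ is $s$-sparse if $\|x\|_0\le s$. The restricted isometry constant $\delta_s(\phi)$ of $\phi\in\mathbb R^{P\times N}$ is the smallest number such that $(1-\delta_s(\phi))\|x\|_2^2\le\|\phi x\|_2^2\le(1+\delta_s(\phi))\|x\|_2^2$ for all $s$-sparse $x\in\mathbb R^N$. $\Psi^\dagger$ denotes the Moore–Penrose pseudoinverse. *)

theory Defs
  imports Complex_Main "Jordan_Normal_Form.DL_Rank" "Jordan_Normal_Form.Gauss_Jordan_Elimination"
begin

text \<open>Vertices are indexed 0-based by {..<N}. A is the real 0/1 adjacency matrix,
  A i j = 1 iff i receives an edge from j. States are functions nat => real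
  (only components < N are meaningful).\<close>

definition out_deg :: "nat \<Rightarrow> (nat \<Rightarrow> nat \<Rightarrow> real) \<Rightarrow> nat \<Rightarrow> nat" where
  "out_deg N A q = card {i. i < N \<and> A i q = 1}"

definition max_out_deg :: "nat \<Rightarrow> (nat \<Rightarrow> nat \<Rightarrow> real) \<Rightarrow> nat" where
  "max_out_deg N A = Max ((out_deg N A) ` {..<N})"

definition first_level :: "nat \<Rightarrow> (nat \<Rightarrow> nat \<Rightarrow> real) \<Rightarrow> nat \<Rightarrow> nat set" where
  "first_level N A q = {i. i < N \<and> A i q = 1}"

definition net_step :: "nat \<Rightarrow> (nat \<Rightarrow> real \<Rightarrow> real) \<Rightarrow> (nat \<Rightarrow> nat \<Rightarrow> real \<Rightarrow> real \<Rightarrow> real)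
    \<Rightarrow> (nat \<Rightarrow> nat \<Rightarrow> real) \<Rightarrow> (nat \<Rightarrow> real) \<Rightarrow> (nat \<Rightarrow> real)" where
  "net_step N f h A x = (\<lambda>i. if i < N then f i (x i) + (\<Sum>j<N. A i j * h i j (x i) (x j)) else 0)"

definition traj :: "nat \<Rightarrow> (nat \<Rightarrow> real \<Rightarrow> real) \<Rightarrow> (nat \<Rightarrow> nat \<Rightarrow> real \<Rightarrow> real \<Rightarrow> real)
    \<Rightarrow> (nat \<Rightarrow> nat \<Rightarrow> real) \<Rightarrow> (nat \<Rightarrow> real) \<Rightarrow> nat \<Rightarrow> (nat \<Rightarrow> real)" where
  "traj N f h A x0 t = ((net_step N f h A) ^^ t) x0"

definition pinch :: "real \<Rightarrow> nat \<Rightarrow> (nat \<Rightarrow> real)" where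
  "pinch eps q = (\<lambda>i. if i = q then eps else 0)"

definition supp_vec :: "real vec \<Rightarrow> nat set" where
  "supp_vec v = {i. i < dim_vec v \<and> v $ i \<noteq> 0}"

definition l1_norm :: "real vec \<Rightarrow> real" where
  "l1_norm v = (\<Sum>i<dim_vec v. \<bar>v $ i\<bar>)"

definition sq_norm :: "real vec \<Rightarrow> real" where
  "sq_norm v = (\<Sum>i<dim_vec v. (v $ i)^2)"

definition ric :: "nat \<Rightarrow> real mat \<Rightarrow> real" where
  "ric s phi = Inf {d. \<forall>x \<in> carrier_vec (dim_col phi). card (supp_vec x) \<le> s \<longrightarrow>
       (1 - d) * sq_norm x \<le> sq_norm (phi *\<^sub>v x) \<and> sq_norm (phi *\<^sub>v x) \<le> (1 + d) * sq_norm x}"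

definition l1_argmin :: "real mat \<Rightarrow> real vec \<Rightarrow> real vec set" where
  "l1_argmin phi y = {z \<in> carrier_vec (dim_col phi). phi *\<^sub>v z = y \<and>
       (\<forall>w \<in> carrier_vec (dim_col phi). phi *\<^sub>v w = y \<longrightarrow> l1_norm z \<le> l1_norm w)}"

definition is_pinv :: "real mat \<Rightarrow> real mat \<Rightarrow> bool" where
  "is_pinv M X \<longleftrightarrow> X \<in> carrier_mat (dim_col M) (dim_row M) \<and>
     M * X * M = M \<and> X * M * X = X \<and> transpose_mat (M * X) = M * X \<and> transpose_mat (X * M) = X * M"

definition pinv :: "real mat \<Rightarrow> real mat" where
  "pinv M = (THE X. is_pinv M X)"

text \<open>Psi_i: row index r = q * smax + t (q < N, t < smax) corresponds to the pair (q,t);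
  column l < s_i holds psi_i^l(x^q(t)).\<close>
definition Psi_mat :: "nat \<Rightarrow> nat \<Rightarrow> nat \<Rightarrow> (nat \<Rightarrow> nat \<Rightarrow> (nat \<Rightarrow> real)) \<Rightarrow> (nat \<Rightarrow> (nat \<Rightarrow> real) \<Rightarrow> real) \<Rightarrow> real mat" where
  "Psi_mat N smax si X psi_i = mat (N * smax) si (\<lambda>(r, l). psi_i l (X (r div smax) (r mod smax)))"

definition b_vec :: "nat \<Rightarrow> nat \<Rightarrow> (nat \<Rightarrow> nat \<Rightarrow> (nat \<Rightarrow> real)) \<Rightarrow> nat \<Rightarrow> real vec" where
  "b_vec N smax X i = vec (N * smax) (\<lambda>r. X (r div smax) (r mod smax + 1) i)"

end

theory Submission
  imports Defs "HOL-Analysis.Convex"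
begin

(* Starting from a single pinched node, a node can become nonzero at time t+1 only if it was
   nonzero at time t or receives an edge from such a node, because f_i(0) = 0 and h_ij(0,0) = 0.
   Hence x^q(t) has at most (Delta+1)^t nonzero entries, and for t <= s_max the restricted isometry
   bound delta_2S < sqrt 2 - 1 with S = (Delta+1)^s_max yields, by Candes' argument, unique
   l1-recovery of x^q(t). At t = 1 the entry of a node i /= q is A_iq h_iq(0, eps_q), which by
   Assumption 2 is nonzero exactly when i is in L_1(q). Finally the model equation states that
   Psi_i c_i = b_i, and full column rank makes c_i the unique solution, equal to
   (Psi_i^T Psi_i)^-1 Psi_i^T b_i, which is the pseudoinverse solution. *)

section \<open>Least squares with a full column rank matrix\<close>

lemma (in vec_space) full_rank_distinct_cols:
  assumes A: "A \<in> carrier_mat n nc" and r: "rank A = nc"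
  shows "distinct (cols A)"
proof (rule ccontr)
  assume "\<not> distinct (cols A)"
  then have "card (set (cols A)) \<noteq> length (cols A)" using card_distinct by blast
  then have "card (set (cols A)) < nc" using A card_length[of "cols A"] by simp
  obtain S where S: "maximal S (\<lambda>T. T \<subseteq> set (cols A) \<and> lin_indpt T)"
    using maximal_exists[of "\<lambda>T. T \<subseteq> set (cols A) \<and> lin_indpt T" "card (set (cols A))" "{}"]
    by (meson List.finite_set card_mono empty_iff empty_subsetI finite_lin_indpt2 rev_finite_subset)
  then have "card S \<le> card (set (cols A))" by (simp add: card_mono maximal_def)
  then show False using rank_card_indpt[OF A S] r \<open>card (set (cols A)) < nc\<close> by simp
qed

lemma (in vec_space) full_rank_mult_vec_eq_0D:
  assumes A: "A \<in> carrier_mat n nc" and r: "rank A = nc"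
    and v: "v \<in> carrier_vec nc" and Av: "A *\<^sub>v v = 0\<^sub>v n"
  shows "v = 0\<^sub>v nc"
proof (rule ccontr)
  assume "v \<noteq> 0\<^sub>v nc"
  from lin_depI[OF A v this Av full_rank_distinct_cols[OF A r]]
  show False using full_rank_lin_indpt[OF A r full_rank_distinct_cols[OF A r]] by contradiction
qed

lemma full_rank_solution_unique:
  fixes M :: "real mat"
  assumes M: "M \<in> carrier_mat m n" and r: "vec_space.rank m M = n"
    and c: "c \<in> carrier_vec n" and Mc: "M *\<^sub>v c = b"
  shows "{x \<in> carrier_vec n. M *\<^sub>v x = b} = {c}"
proof -
  have unique: "x = c" if x: "x \<in> carrier_vec n" "M *\<^sub>v x = b" for x
  proof -
    have b: "b \<in> carrier_vec m" unfolding Mc[symmetric] using M c by (rule mult_mat_vec_carrier)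
    have "M *\<^sub>v (x - c) = M *\<^sub>v x - M *\<^sub>v c" using M x(1) c by (rule mult_minus_distrib_mat_vec)
    also have "\<dots> = 0\<^sub>v m" unfolding x(2) Mc using b by (rule minus_cancel_vec)
    finally have "M *\<^sub>v (x - c) = 0\<^sub>v m" .
    moreover have "x - c \<in> carrier_vec n" using x(1) c by simp
    ultimately have "x - c = 0\<^sub>v n" using vec_space.full_rank_mult_vec_eq_0D[OF M r] by blast
    have "x $ i = c $ i" if "i < n" for i
    proof -
      have "(x - c) $ i = 0" using \<open>x - c = 0\<^sub>v n\<close> that by simp
      then show ?thesis using that c by simp
    qed
    then show "x = c" using x c by (intro eq_vecI) auto
  qed
  show ?thesis using unique c Mc by blast
qed

lemma gram_mat_invertible:
  fixes M :: "real mat"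
  assumes M: "M \<in> carrier_mat m n" and r: "vec_space.rank m M = n"
  shows "\<exists>B. mat_inverse (transpose_mat M * M) = Some B"
proof -
  let ?G = "transpose_mat M * M"
  have G: "?G \<in> carrier_mat n n" using M by simp
  have "det ?G \<noteq> 0"
  proof
    assume "det ?G = 0"
    then obtain v where v: "v \<in> carrier_vec n" "v \<noteq> 0\<^sub>v n" "?G *\<^sub>v v = 0\<^sub>v n"
      using det_0_iff_vec_prod_zero[OF G] by blast
    have "(M *\<^sub>v v) \<bullet> (M *\<^sub>v v) = (?G *\<^sub>v v) \<bullet> v"
      using transpose_vec_mult_scalar[OF M v(1), of "M *\<^sub>v v"] M v by (simp add: assoc_mult_mat_vec)
    then have "M *\<^sub>v v = 0\<^sub>v m" using v M conjugate_square_eq_0_vec[of "M *\<^sub>v v" m] by simp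
    then show False using vec_space.full_rank_mult_vec_eq_0D[OF M r v(1)] v(2) by simp
  qed
  then show ?thesis
    using mat_inverse(1)[OF G, of undefined] det_non_zero_imp_unit[OF G, of undefined]
    by (cases "mat_inverse ?G") auto
qed

lemma gram_inverse_symmetric:
  fixes M B :: "real mat"
  assumes M: "M \<in> carrier_mat m n" and B: "mat_inverse (transpose_mat M * M) = Some B"
  shows "transpose_mat B = B"
proof -
  let ?G = "transpose_mat M * M"
  have G: "?G \<in> carrier_mat n n" using M by simp
  have Bc: "B \<in> carrier_mat n n" and GB: "?G * B = 1\<^sub>m n"
    using mat_inverse(2)[OF G B] by auto
  have "transpose_mat ?G = ?G" using M by (simp add: transpose_mult[of _ n m M n])
  then have BtG: "transpose_mat B * ?G = 1\<^sub>m n"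
    using arg_cong[OF GB, of transpose_mat] transpose_mult[OF G Bc] by simp
  have "B = (transpose_mat B * ?G) * B" using Bc BtG by simp
  also have "\<dots> = transpose_mat B * (?G * B)" using Bc G by (intro assoc_mult_mat[of _ n n]) auto
  also have "\<dots> = transpose_mat B" using GB Bc by simp
  finally show ?thesis by simp
qed

lemma pinv_eq_gram_inverse:
  fixes M B :: "real mat"
  assumes M: "M \<in> carrier_mat m n" and B: "mat_inverse (transpose_mat M * M) = Some B"
  shows "pinv M = B * transpose_mat M"
proof -
  let ?G = "transpose_mat M * M" and ?X = "B * transpose_mat M"
  have G: "?G \<in> carrier_mat n n" using M by simp
  have Bc: "B \<in> carrier_mat n n" and BG: "B * ?G = 1\<^sub>m n"
    using mat_inverse(2)[OF G B] by auto
  have Mt: "transpose_mat M \<in> carrier_mat n m" using M by simp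
  have X: "?X \<in> carrier_mat n m" using Bc M by simp
  have XM: "?X * M = 1\<^sub>m n"
    using BG assoc_mult_mat[OF Bc Mt M] by simp
  have "is_pinv M ?X"
    unfolding is_pinv_def
  proof (intro conjI)
    show "?X \<in> carrier_mat (dim_col M) (dim_row M)" using X M by simp
    show "M * ?X * M = M" using XM M assoc_mult_mat[OF M X M] by simp
    show "?X * M * ?X = ?X" using XM left_mult_one_mat[OF X] by simp
    show "transpose_mat (?X * M) = ?X * M" using XM by simp
    have "transpose_mat (M * ?X) = transpose_mat ?X * transpose_mat M" by (rule transpose_mult[OF M X])
    also have "transpose_mat ?X = M * B"
      using transpose_mult[OF Bc Mt] gram_inverse_symmetric[OF M B] by simp
    also have "M * B * transpose_mat M = M * ?X" by (rule assoc_mult_mat[OF M Bc Mt])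
    finally show "transpose_mat (M * ?X) = M * ?X" .
  qed
  moreover have "Y = ?X" if "is_pinv M Y" for Y
  proof -
    have Y: "Y \<in> carrier_mat n m" and MYM: "M * Y * M = M" and MY: "transpose_mat (M * Y) = M * Y"
      using that M unfolding is_pinv_def by auto
    have MYc: "M * Y \<in> carrier_mat m m" using M Y by simp
    have "transpose_mat M = transpose_mat (M * Y * M)" using MYM by simp
    also have "\<dots> = transpose_mat M * (M * Y)" using transpose_mult[OF MYc M] MY by simp
    finally have "?X = B * (transpose_mat M * (M * Y))" by simp
    also have "\<dots> = B * (?G * Y)" using assoc_mult_mat[OF Mt M Y] by simp
    also have "\<dots> = (B * ?G) * Y" using assoc_mult_mat[OF Bc G Y] by simp
    also have "\<dots> = Y" using BG Y by simp
    finally show ?thesis by simp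
  qed
  ultimately show ?thesis unfolding pinv_def by (rule the_equality)
qed

lemma full_rank_least_squares:
  fixes M :: "real mat"
  assumes M: "M \<in> carrier_mat m n" and r: "vec_space.rank m M = n"
    and c: "c \<in> carrier_vec n" and Mc: "M *\<^sub>v c = b"
  shows "{x \<in> carrier_vec n. M *\<^sub>v x = b} = {c} \<and> c = pinv M *\<^sub>v b
    \<and> (\<exists>B. mat_inverse (transpose_mat M * M) = Some B \<and> c = (B * transpose_mat M) *\<^sub>v b)"
proof -
  obtain B where B: "mat_inverse (transpose_mat M * M) = Some B"
    using gram_mat_invertible[OF M r] by blast
  have G: "transpose_mat M * M \<in> carrier_mat n n" using M by simp
  have Bc: "B \<in> carrier_mat n n" and BG: "B * (transpose_mat M * M) = 1\<^sub>m n"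
    using mat_inverse(2)[OF G B] by auto
  have Mt: "transpose_mat M \<in> carrier_mat n m" using M by simp
  have BMt: "B * transpose_mat M \<in> carrier_mat n m" using Bc Mt by simp
  have "(B * transpose_mat M) *\<^sub>v b = (B * transpose_mat M * M) *\<^sub>v c"
    unfolding Mc[symmetric] by (rule assoc_mult_mat_vec[OF BMt M c, symmetric])
  also have "\<dots> = c" using BG c by (simp add: assoc_mult_mat[OF Bc Mt M])
  finally show ?thesis
    using full_rank_solution_unique[OF assms] pinv_eq_gram_inverse[OF M B] B by auto
qed

section \<open>Sparse recovery under the restricted isometry property\<close>

(* A vector of R^N is represented by a function nat => real of which only the entries below
   N = dim_col M matter: mat_apply M z is M z, image_inner M u v is <M u, M v> and sum_sq N z is
   the squared norm of z. This avoids dimension bookkeeping when vectors are restricted to index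
   sets. *)

definition mat_apply :: "real mat \<Rightarrow> (nat \<Rightarrow> real) \<Rightarrow> nat \<Rightarrow> real" where
  "mat_apply M z k = (\<Sum>j<dim_col M. M $$ (k, j) * z j)"

definition image_inner :: "real mat \<Rightarrow> (nat \<Rightarrow> real) \<Rightarrow> (nat \<Rightarrow> real) \<Rightarrow> real" where
  "image_inner M u v = (\<Sum>k<dim_row M. mat_apply M u k * mat_apply M v k)"

definition sum_sq :: "nat \<Rightarrow> (nat \<Rightarrow> real) \<Rightarrow> real" where
  "sum_sq N z = (\<Sum>i<N. (z i)\<^sup>2)"

definition restrict0 :: "nat set \<Rightarrow> (nat \<Rightarrow> real) \<Rightarrow> nat \<Rightarrow> real" where
  "restrict0 T z i = (if i \<in> T then z i else 0)"

definition rip :: "real mat \<Rightarrow> real \<Rightarrow> nat \<Rightarrow> bool" where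
  "rip M d S \<longleftrightarrow> (\<forall>z T. T \<subseteq> {..<dim_col M} \<longrightarrow> card T \<le> S \<longrightarrow> (\<forall>i. i \<notin> T \<longrightarrow> z i = 0) \<longrightarrow>
      (1 - d) * sum_sq (dim_col M) z \<le> image_inner M z z \<and>
      image_inner M z z \<le> (1 + d) * sum_sq (dim_col M) z)"

definition null_space_property :: "real mat \<Rightarrow> nat \<Rightarrow> real \<Rightarrow> bool" where
  "null_space_property M s \<rho> \<longleftrightarrow> (\<forall>h T. (\<forall>k<dim_row M. mat_apply M h k = 0) \<longrightarrow>
      T \<subseteq> {..<dim_col M} \<longrightarrow> card T \<le> s \<longrightarrow>
      (\<Sum>i\<in>T. \<bar>h i\<bar>) \<le> \<rho> * (\<Sum>i\<in>{..<dim_col M} - T. \<bar>h i\<bar>))"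

lemma mat_apply_lincomb:
  "mat_apply M (\<lambda>i. x * u i + y * v i) k = x * mat_apply M u k + y * mat_apply M v k"
  unfolding mat_apply_def by (simp add: sum.distrib sum_distrib_left algebra_simps)

lemma mat_apply_add: "mat_apply M (\<lambda>i. u i + v i) k = mat_apply M u k + mat_apply M v k"
  using mat_apply_lincomb[of M 1 u 1 v k] by simp

lemma mat_apply_sum: "mat_apply M (\<lambda>i. \<Sum>r\<in>R. v r i) k = (\<Sum>r\<in>R. mat_apply M (v r) k)"
  unfolding mat_apply_def by (simp add: sum_distrib_left sum.swap[of _ R])

lemma mat_apply_cong: "(\<And>i. i < dim_col M \<Longrightarrow> u i = v i) \<Longrightarrow> mat_apply M u k = mat_apply M v k"
  unfolding mat_apply_def by (intro sum.cong) auto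

lemma image_inner_commute: "image_inner M u v = image_inner M v u"
  unfolding image_inner_def by (simp add: mult.commute)

lemma image_inner_add_left:
  "image_inner M (\<lambda>i. u i + v i) w = image_inner M u w + image_inner M v w"
  unfolding image_inner_def mat_apply_add by (simp add: sum.distrib algebra_simps)

lemma image_inner_lincomb:
  "image_inner M (\<lambda>i. x * u i + y * v i) (\<lambda>i. x * u i + y * v i)
     = x\<^sup>2 * image_inner M u u + 2 * x * y * image_inner M u v + y\<^sup>2 * image_inner M v v"
  unfolding image_inner_def mat_apply_lincomb
  by (simp add: sum.distrib sum_distrib_left algebra_simps power2_eq_square)

lemma image_inner_scale: "image_inner M (\<lambda>i. x * u i) (\<lambda>i. y * v i) = x * y * image_inner M u v"
  using mat_apply_lincomb[of M x u 0 u] mat_apply_lincomb[of M y v 0 v]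
  unfolding image_inner_def by (simp add: sum_distrib_left algebra_simps)

lemma image_inner_eq_0: "(\<And>i. i < dim_col M \<Longrightarrow> u i = 0) \<Longrightarrow> image_inner M u v = 0"
  unfolding image_inner_def mat_apply_def by simp

lemma sum_sq_nonneg: "0 \<le> sum_sq N z"
  unfolding sum_sq_def by (simp add: sum_nonneg)

lemma sum_sq_eq_0D: "sum_sq N z = 0 \<Longrightarrow> i < N \<Longrightarrow> z i = 0"
  unfolding sum_sq_def by (simp add: sum_nonneg_eq_0_iff)

lemma sum_sq_scale: "sum_sq N (\<lambda>i. x * z i) = x\<^sup>2 * sum_sq N z"
  unfolding sum_sq_def by (simp add: sum_distrib_left power_mult_distrib)

lemma sum_sq_disjoint_add:
  "(\<And>i. u i * v i = 0) \<Longrightarrow> sum_sq N (\<lambda>i. u i + v i) = sum_sq N u + sum_sq N v"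
  unfolding sum_sq_def by (simp add: power2_sum sum.distrib)

lemma sum_sq_restrict0:
  assumes "T \<subseteq> {..<N}"
  shows "sum_sq N (restrict0 T z) = (\<Sum>i\<in>T. (z i)\<^sup>2)"
proof -
  have "sum_sq N (restrict0 T z) = (\<Sum>i<N. if i \<in> T then (z i)\<^sup>2 else 0)"
    unfolding sum_sq_def restrict0_def by (intro sum.cong) auto
  also have "\<dots> = (\<Sum>i\<in>{..<N} \<inter> T. (z i)\<^sup>2)" by (simp add: sum.inter_restrict)
  finally show ?thesis using assms by (simp add: Int_absorb1)
qed

lemma sum_restrict0_disjoint:
  assumes "finite I" and "disjoint_family_on B I"
  shows "(\<Sum>k\<in>I. restrict0 (B k) z i) = restrict0 (\<Union>k\<in>I. B k) z i"
proof (cases "i \<in> (\<Union>k\<in>I. B k)")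
  case True
  then obtain k0 where k0: "k0 \<in> I" "i \<in> B k0" by auto
  have "(\<Sum>k\<in>I. restrict0 (B k) z i) = (\<Sum>k\<in>I. if k = k0 then z i else 0)"
    using assms(2) k0 unfolding disjoint_family_on_def restrict0_def by (intro sum.cong) auto
  then show ?thesis using True k0 assms(1) by (simp add: restrict0_def)
qed (auto simp: restrict0_def)

lemma rip_inner_disjoint_unit:
  assumes rip: "rip M d S"
    and UV: "U \<inter> V = {}" "U \<union> V \<subseteq> {..<dim_col M}" "card U + card V \<le> S"
    and u: "\<And>i. i \<notin> U \<Longrightarrow> u i = 0" and v: "\<And>i. i \<notin> V \<Longrightarrow> v i = 0"
    and u1: "sum_sq (dim_col M) u = 1" and v1: "sum_sq (dim_col M) v = 1"
  shows "\<bar>image_inner M u v\<bar> \<le> d"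
proof -
  have card: "card (U \<union> V) \<le> S" using card_Un_le[of U V] UV(3) by linarith
  have uv: "u i * (y * v i) = 0" for i y using u v UV(1) by (cases "i \<in> U") auto
  have bounds: "2 * (1 - d) \<le> image_inner M u u + 2 * y * image_inner M u v + image_inner M v v
      \<and> image_inner M u u + 2 * y * image_inner M u v + image_inner M v v \<le> 2 * (1 + d)"
    if y: "y\<^sup>2 = 1" for y
  proof -
    let ?z = "\<lambda>i. u i + y * v i"
    have "sum_sq (dim_col M) ?z = 2"
      using sum_sq_disjoint_add[of u "\<lambda>i. y * v i" "dim_col M", OF uv] u1 v1 y
      by (simp add: sum_sq_scale)
    moreover have "\<forall>i. i \<notin> U \<union> V \<longrightarrow> ?z i = 0" using u v by simp
    moreover have "image_inner M ?z ?z
        = image_inner M u u + 2 * y * image_inner M u v + image_inner M v v"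
      using image_inner_lincomb[of M 1 u y v] y by simp
    ultimately show ?thesis
      using rip[unfolded rip_def, rule_format, OF UV(2) card, of ?z] by simp
  qed
  show ?thesis using bounds[of 1] bounds[of "-1"] by (simp add: abs_le_iff)
qed

lemma rip_inner_disjoint:
  assumes rip: "rip M d S"
    and UV: "U \<inter> V = {}" "U \<union> V \<subseteq> {..<dim_col M}" "card U + card V \<le> S"
    and u: "\<And>i. i \<notin> U \<Longrightarrow> u i = 0" and v: "\<And>i. i \<notin> V \<Longrightarrow> v i = 0"
  shows "\<bar>image_inner M u v\<bar> \<le> d * sqrt (sum_sq (dim_col M) u) * sqrt (sum_sq (dim_col M) v)"
proof (cases "sum_sq (dim_col M) u = 0 \<or> sum_sq (dim_col M) v = 0")
  case True
  then have "image_inner M u v = 0"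
    using image_inner_eq_0[of M u v] image_inner_eq_0[of M v u] image_inner_commute[of M u v]
      sum_sq_eq_0D by metis
  then show ?thesis using True by auto
next
  case False
  define a b where "a = sqrt (sum_sq (dim_col M) u)" and "b = sqrt (sum_sq (dim_col M) v)"
  have ab: "a > 0" "b > 0" "a\<^sup>2 = sum_sq (dim_col M) u" "b\<^sup>2 = sum_sq (dim_col M) v"
    using False sum_sq_nonneg[of "dim_col M" u] sum_sq_nonneg[of "dim_col M" v]
    unfolding a_def b_def by (auto simp: less_le)
  have "sum_sq (dim_col M) (\<lambda>i. (1 / a) * u i) = 1" "sum_sq (dim_col M) (\<lambda>i. (1 / b) * v i) = 1"
    unfolding sum_sq_scale using ab False by (simp_all add: power_divide)
  then have "\<bar>image_inner M (\<lambda>i. (1 / a) * u i) (\<lambda>i. (1 / b) * v i)\<bar> \<le> d"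
    by (intro rip_inner_disjoint_unit[OF rip UV]) (use u v in auto)
  moreover have "image_inner M (\<lambda>i. (1 / a) * u i) (\<lambda>i. (1 / b) * v i) = image_inner M u v / (a * b)"
    unfolding image_inner_scale by simp
  ultimately have "\<bar>image_inner M u v\<bar> / (a * b) \<le> d"
    using ab(1,2) by (simp add: abs_mult)
  then show ?thesis
    unfolding a_def[symmetric] b_def[symmetric] using ab(1,2) by (simp add: pos_divide_le_eq mult.assoc)
qed

lemma image_inner_kernel_split:
  assumes ker: "\<And>k. k < dim_row M \<Longrightarrow> mat_apply M h k = 0"
    and decomp: "\<And>i. i < dim_col M \<Longrightarrow> h i = w i + (\<Sum>r\<in>R. v r i)"
  shows "image_inner M w w = - (\<Sum>r\<in>R. image_inner M w (v r))"
proof -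
  have w: "mat_apply M w k = - (\<Sum>r\<in>R. mat_apply M (v r) k)" if "k < dim_row M" for k
  proof -
    have "mat_apply M h k = mat_apply M (\<lambda>i. w i + (\<Sum>r\<in>R. v r i)) k"
      using decomp by (rule mat_apply_cong)
    then show ?thesis using ker[OF that] by (simp add: mat_apply_add mat_apply_sum)
  qed
  have "image_inner M w w = (\<Sum>k<dim_row M. mat_apply M w k * - (\<Sum>r\<in>R. mat_apply M (v r) k))"
    unfolding image_inner_def using w by (intro sum.cong) auto
  also have "\<dots> = - (\<Sum>r\<in>R. image_inner M w (v r))"
    unfolding image_inner_def by (simp add: sum_distrib_left sum_negf sum.swap[of _ R])
  finally show ?thesis .
qed

definition decreasing_partition ::
    "(nat \<Rightarrow> real) \<Rightarrow> nat \<Rightarrow> nat set \<Rightarrow> nat \<Rightarrow> (nat \<Rightarrow> nat set) \<Rightarrow> bool" where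
  "decreasing_partition g s C K B \<longleftrightarrow>
     disjoint_family B \<and> (\<Union>k. B k) = C \<and> (\<forall>k. K \<le> k \<longrightarrow> B k = {}) \<and> (\<forall>k. card (B k) \<le> s) \<and>
     (\<forall>k. B (Suc k) \<noteq> {} \<longrightarrow> card (B k) = s) \<and> (\<forall>k. \<forall>i\<in>B k. \<forall>j\<in>B (Suc k). g j \<le> g i)"

lemma exists_top_subset:
  fixes g :: "nat \<Rightarrow> real"
  assumes "finite C" and "k \<le> card C"
  shows "\<exists>B\<subseteq>C. card B = k \<and> (\<forall>i\<in>B. \<forall>j\<in>C - B. g j \<le> g i)"
  using assms(2)
proof (induction k)
  case (Suc k)
  then obtain B where B: "B \<subseteq> C" "card B = k" "\<forall>i\<in>B. \<forall>j\<in>C - B. g j \<le> g i" by auto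
  have fin: "finite B" "finite (C - B)" using B(1) assms(1) finite_subset by auto
  have "card (C - B) = card C - k" using card_Diff_subset[OF fin(1) B(1)] B(2) by simp
  then have "C - B \<noteq> {}" using Suc.prems by (intro notI) simp
  then have "Max (g ` (C - B)) \<in> g ` (C - B)" using fin(2) by (intro Max_in) auto
  then obtain i0 where i0: "i0 \<in> C - B" "g i0 = Max (g ` (C - B))" by (metis imageE)
  then have "\<forall>j\<in>C - B. g j \<le> g i0" using fin(2) by simp
  show ?case
    by (rule exI[of _ "insert i0 B"]) (use i0 B fin in auto)
qed (rule exI[of _ "{}"], simp)

lemma decreasing_partition_single:
  assumes "card C \<le> s"
  shows "decreasing_partition g s C 1 (\<lambda>k. if k = 0 then C else {})"
  using assms unfolding decreasing_partition_def disjoint_family_on_def by auto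

lemma decreasing_partition_Cons:
  assumes B0: "B0 \<subseteq> C" "card B0 = s" "\<forall>i\<in>B0. \<forall>j\<in>C - B0. g j \<le> g i"
    and part: "decreasing_partition g s (C - B0) K B"
  shows "decreasing_partition g s C (Suc K) (case_nat B0 B)"
proof -
  have B: "disjoint_family B" "(\<Union>k. B k) = C - B0" "\<And>k. K \<le> k \<Longrightarrow> B k = {}"
    "\<And>k. card (B k) \<le> s" "\<And>k. B (Suc k) \<noteq> {} \<Longrightarrow> card (B k) = s"
    "\<And>k i j. i \<in> B k \<Longrightarrow> j \<in> B (Suc k) \<Longrightarrow> g j \<le> g i"
    using part unfolding decreasing_partition_def by blast+
  have sub: "B k \<subseteq> C - B0" for k unfolding B(2)[symmetric] by blast
  have "disjoint_family (case_nat B0 B)"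
    using B(1) sub unfolding disjoint_family_on_def by (auto split: nat.splits)
  moreover have "(\<Union>k. case_nat B0 B k) = C"
  proof
    show "(\<Union>k. case_nat B0 B k) \<subseteq> C"
    proof
      fix i assume "i \<in> (\<Union>k. case_nat B0 B k)"
      then obtain k where "i \<in> case_nat B0 B k" by blast
      then show "i \<in> C" using B0(1) sub by (cases k) auto
    qed
    show "C \<subseteq> (\<Union>k. case_nat B0 B k)"
    proof
      fix i assume "i \<in> C"
      then have "i \<in> case_nat B0 B 0 \<or> (\<exists>k. i \<in> case_nat B0 B (Suc k))" using B(2) by auto
      then show "i \<in> (\<Union>k. case_nat B0 B k)" by blast
    qed
  qed
  moreover have "\<forall>k. Suc K \<le> k \<longrightarrow> case_nat B0 B k = {}" using B(3) by (auto split: nat.splits)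
  moreover have "\<forall>k. card (case_nat B0 B k) \<le> s" using B0(2) B(4) by (auto split: nat.splits)
  moreover have "\<forall>k. case_nat B0 B (Suc k) \<noteq> {} \<longrightarrow> card (case_nat B0 B k) = s"
    using B0(2) B(5) by (auto split: nat.splits)
  moreover have "\<forall>k. \<forall>i\<in>case_nat B0 B k. \<forall>j\<in>case_nat B0 B (Suc k). g j \<le> g i"
  proof (intro allI ballI)
    fix k i j assume ij: "i \<in> case_nat B0 B k" "j \<in> case_nat B0 B (Suc k)"
    show "g j \<le> g i"
    proof (cases k)
      case 0
      then show ?thesis using ij B0(3) sub[of 0] by auto
    next
      case (Suc k')
      then show ?thesis using ij B(6) by simp
    qed
  qed
  ultimately show ?thesis unfolding decreasing_partition_def by blast
qed

lemma decreasing_partition_exists: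
  fixes g :: "nat \<Rightarrow> real"
  assumes "finite C" and "0 < s"
  shows "\<exists>K B. decreasing_partition g s C K B"
  using assms(1)
proof (induction "card C" arbitrary: C rule: less_induct)
  case less
  show ?case
  proof (cases "card C \<le> s")
    case True
    then show ?thesis using decreasing_partition_single by blast
  next
    case False
    obtain B0 where B0: "B0 \<subseteq> C" "card B0 = s" "\<forall>i\<in>B0. \<forall>j\<in>C - B0. g j \<le> g i"
      using exists_top_subset[OF less.prems, of s g] False by auto
    have "card (C - B0) < card C"
      using card_Diff_subset[OF finite_subset[OF B0(1) less.prems] B0(1)] B0(2) assms(2) False
      by linarith
    moreover have "finite (C - B0)" using less.prems by simp
    ultimately obtain K B where "decreasing_partition g s (C - B0) K B" using less.hyps by blast
    then show ?thesis using decreasing_partition_Cons[OF B0] by blast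
  qed
qed

lemma decreasing_partition_tail:
  assumes "decreasing_partition g s C K B"
  shows "(\<Union>k<K. B (Suc k)) = C - B 0"
proof
  have B: "disjoint_family B" "(\<Union>k. B k) = C" "\<And>k. K \<le> k \<Longrightarrow> B k = {}"
    using assms unfolding decreasing_partition_def by blast+
  show "(\<Union>k<K. B (Suc k)) \<subseteq> C - B 0"
    using B(1) unfolding B(2)[symmetric] disjoint_family_on_def by blast
  show "C - B 0 \<subseteq> (\<Union>k<K. B (Suc k))"
  proof
    fix i assume "i \<in> C - B 0"
    then obtain k' where k': "i \<in> B k'" "k' \<noteq> 0" unfolding B(2)[symmetric] by auto
    then obtain k where k: "k' = Suc k" using not0_implies_Suc by blast
    then have "k < K" using k' B(3)[of k'] by (cases "K \<le> k'") auto
    then show "i \<in> (\<Union>k<K. B (Suc k))" using k k' by auto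
  qed
qed

lemma block_norm_le_prev_l1:
  fixes h :: "nat \<Rightarrow> real"
  assumes "card B \<le> s" and "card B' = s" and "0 < s"
    and le: "\<And>i j. i \<in> B' \<Longrightarrow> j \<in> B \<Longrightarrow> \<bar>h j\<bar> \<le> \<bar>h i\<bar>"
  shows "sqrt (\<Sum>j\<in>B. (h j)\<^sup>2) \<le> (\<Sum>i\<in>B'. \<bar>h i\<bar>) / sqrt s"
proof -
  define m where "m = (\<Sum>i\<in>B'. \<bar>h i\<bar>) / s"
  have m: "0 \<le> m" unfolding m_def by (simp add: sum_nonneg)
  have hm: "\<bar>h j\<bar> \<le> m" if "j \<in> B" for j
  proof -
    have "s * \<bar>h j\<bar> \<le> (\<Sum>i\<in>B'. \<bar>h i\<bar>)"
      using sum_mono[of B' "\<lambda>_. \<bar>h j\<bar>" "\<lambda>i. \<bar>h i\<bar>"] le that assms(2) by simp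
    then show ?thesis unfolding m_def using assms(3) by (simp add: le_divide_eq mult.commute)
  qed
  have "(\<Sum>j\<in>B. (h j)\<^sup>2) \<le> (\<Sum>j\<in>B. m\<^sup>2)"
    using hm by (intro sum_mono) (metis abs_ge_zero power2_abs power_mono)
  also have "\<dots> \<le> s * m\<^sup>2" using assms(1) by (simp add: mult_right_mono)
  finally have "sqrt (\<Sum>j\<in>B. (h j)\<^sup>2) \<le> sqrt (s * m\<^sup>2)" by (rule real_sqrt_le_mono)
  also have "\<dots> = sqrt s * m" using m by (simp add: real_sqrt_mult)
  also have "\<dots> = (\<Sum>i\<in>B'. \<bar>h i\<bar>) / sqrt s"
    unfolding m_def using assms(3) by (simp add: field_simps real_sqrt_divide)
  finally show ?thesis .
qed

lemma tail_blocks_norm_sum: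
  fixes h :: "nat \<Rightarrow> real"
  assumes C: "finite C" and s: "0 < s" and part: "decreasing_partition (\<lambda>i. \<bar>h i\<bar>) s C K B"
  shows "(\<Sum>k<K. sqrt (\<Sum>j\<in>B (Suc k). (h j)\<^sup>2)) \<le> (\<Sum>i\<in>C. \<bar>h i\<bar>) / sqrt s"
proof -
  have B: "disjoint_family B" "(\<Union>k. B k) = C" "\<And>k. card (B k) \<le> s"
    "\<And>k. B (Suc k) \<noteq> {} \<Longrightarrow> card (B k) = s"
    "\<And>k i j. i \<in> B k \<Longrightarrow> j \<in> B (Suc k) \<Longrightarrow> \<bar>h j\<bar> \<le> \<bar>h i\<bar>"
    using part unfolding decreasing_partition_def by blast+
  have BC: "B k \<subseteq> C" for k unfolding B(2)[symmetric] by blast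
  have "(\<Sum>k<K. sqrt (\<Sum>j\<in>B (Suc k). (h j)\<^sup>2)) \<le> (\<Sum>k<K. (\<Sum>i\<in>B k. \<bar>h i\<bar>) / sqrt s)"
  proof (rule sum_mono)
    fix k
    show "sqrt (\<Sum>j\<in>B (Suc k). (h j)\<^sup>2) \<le> (\<Sum>i\<in>B k. \<bar>h i\<bar>) / sqrt s"
    proof (cases "B (Suc k) = {}")
      case False
      then show ?thesis using block_norm_le_prev_l1 B(3,4,5) s by blast
    qed (simp add: sum_nonneg)
  qed
  also have "\<dots> = (\<Sum>i\<in>(\<Union>k<K. B k). \<bar>h i\<bar>) / sqrt s"
    using B(1) finite_subset[OF BC C]
    by (subst sum.UNION_disjoint) (auto simp: sum_divide_distrib disjoint_family_on_def)
  also have "\<dots> \<le> (\<Sum>i\<in>C. \<bar>h i\<bar>) / sqrt s"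
    using BC C by (intro divide_right_mono sum_mono2) auto
  finally show ?thesis .
qed

lemma l1_le_sqrt_card_l2:
  fixes h :: "'a \<Rightarrow> real"
  shows "(\<Sum>i\<in>T. \<bar>h i\<bar>) \<le> sqrt (card T) * sqrt (\<Sum>i\<in>T. (h i)\<^sup>2)"
proof -
  have "(\<Sum>i\<in>T. \<bar>h i\<bar>)\<^sup>2 \<le> card T * (\<Sum>i\<in>T. (h i)\<^sup>2)"
    using sum_squared_le_sum_of_squares[of "\<lambda>i. \<bar>h i\<bar>" T] by (simp add: mult.commute)
  then show ?thesis by (metis real_le_rsqrt real_sqrt_mult)
qed

lemma l1_le_sqrt_sum_sq_restrict0:
  fixes h :: "nat \<Rightarrow> real"
  assumes "T0 \<subseteq> T" and "T \<subseteq> {..<N}" and "card T0 \<le> s"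
  shows "(\<Sum>i\<in>T0. \<bar>h i\<bar>) \<le> sqrt s * sqrt (sum_sq N (restrict0 T h))"
proof -
  have fin: "finite T" using assms(2) finite_subset by blast
  have "(\<Sum>i\<in>T0. \<bar>h i\<bar>) \<le> sqrt (card T0) * sqrt (\<Sum>i\<in>T0. (h i)\<^sup>2)" by (rule l1_le_sqrt_card_l2)
  also have "\<dots> \<le> sqrt s * sqrt (\<Sum>i\<in>T. (h i)\<^sup>2)"
    using assms(1,3) fin by (intro mult_mono real_sqrt_le_mono sum_mono2) (auto simp: sum_nonneg)
  also have "(\<Sum>i\<in>T. (h i)\<^sup>2) = sum_sq N (restrict0 T h)" using assms(2) by (rule sum_sq_restrict0[symmetric])
  finally show ?thesis .
qed

lemma add_le_sqrt2_sqrt_sum_sq: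
  fixes a b :: real
  shows "a + b \<le> sqrt 2 * sqrt (a\<^sup>2 + b\<^sup>2)"
proof -
  have "(a + b)\<^sup>2 \<le> 2 * (a\<^sup>2 + b\<^sup>2)"
    using zero_le_power2[of "a - b"] by (simp add: power2_eq_square algebra_simps)
  then have "a + b \<le> sqrt (2 * (a\<^sup>2 + b\<^sup>2))" by (rule real_le_rsqrt)
  then show ?thesis by (simp only: real_sqrt_mult)
qed

(* Candes' argument: as M h = 0, the energy of h on T0 \<union> T1 is minus its inner products with
   the tail blocks, each of which is small because the supports are disjoint. *)
lemma rip_head_inner_bound:
  fixes h :: "nat \<Rightarrow> real"
  assumes rip: "rip M d (2 * s)" and d: "0 \<le> d"
    and ker: "\<And>k. k < dim_row M \<Longrightarrow> mat_apply M h k = 0"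
    and T: "T0 \<union> T1 \<subseteq> {..<dim_col M}" "T0 \<inter> T1 = {}" "card T0 \<le> s" "card T1 \<le> s"
    and B: "\<And>r. r \<in> R \<Longrightarrow> B r \<subseteq> {..<dim_col M}" "\<And>r. r \<in> R \<Longrightarrow> B r \<inter> (T0 \<union> T1) = {}"
      "\<And>r. r \<in> R \<Longrightarrow> card (B r) \<le> s"
    and decomp: "\<And>i. i < dim_col M \<Longrightarrow> h i = restrict0 (T0 \<union> T1) h i + (\<Sum>r\<in>R. restrict0 (B r) h i)"
  shows "image_inner M (restrict0 (T0 \<union> T1) h) (restrict0 (T0 \<union> T1) h)
    \<le> sqrt 2 * d * sqrt (sum_sq (dim_col M) (restrict0 (T0 \<union> T1) h))
        * (\<Sum>r\<in>R. sqrt (sum_sq (dim_col M) (restrict0 (B r) h)))"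
proof -
  define w u0 u1 where "w = restrict0 (T0 \<union> T1) h" and "u0 = restrict0 T0 h" and "u1 = restrict0 T1 h"
  define v where "v r = restrict0 (B r) h" for r
  define nrm where "nrm z = sqrt (sum_sq (dim_col M) z)" for z
  have nrm_nonneg: "0 \<le> nrm z" for z unfolding nrm_def by (simp add: sum_sq_nonneg)
  have w_split: "w = (\<lambda>i. u0 i + u1 i)"
    using T(2) unfolding w_def u0_def u1_def restrict0_def by (auto simp: fun_eq_iff)
  have cross: "\<bar>image_inner M w (v r)\<bar> \<le> d * (nrm u0 + nrm u1) * nrm (v r)" if r: "r \<in> R" for r
  proof -
    have "\<bar>image_inner M u0 (v r)\<bar> \<le> d * nrm u0 * nrm (v r)"
      unfolding nrm_def
      by (rule rip_inner_disjoint[OF rip, where U = T0 and V = "B r"])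
        (use B[OF r] T in \<open>auto simp: u0_def v_def restrict0_def\<close>)
    moreover have "\<bar>image_inner M u1 (v r)\<bar> \<le> d * nrm u1 * nrm (v r)"
      unfolding nrm_def
      by (rule rip_inner_disjoint[OF rip, where U = T1 and V = "B r"])
        (use B[OF r] T in \<open>auto simp: u1_def v_def restrict0_def\<close>)
    moreover have "d * (nrm u0 + nrm u1) * nrm (v r) = d * nrm u0 * nrm (v r) + d * nrm u1 * nrm (v r)"
      by (simp add: algebra_simps)
    ultimately show ?thesis
      unfolding w_split image_inner_add_left
      using abs_triangle_ineq[of "image_inner M u0 (v r)" "image_inner M u1 (v r)"] by linarith
  qed
  have "sum_sq (dim_col M) w = sum_sq (dim_col M) u0 + sum_sq (dim_col M) u1"
    unfolding w_split by (rule sum_sq_disjoint_add) (use T(2) in \<open>auto simp: u0_def u1_def restrict0_def\<close>)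
  then have u01: "nrm u0 + nrm u1 \<le> sqrt 2 * nrm w"
    using add_le_sqrt2_sqrt_sum_sq[of "nrm u0" "nrm u1"] unfolding nrm_def by (simp add: sum_sq_nonneg)
  have "image_inner M w w = - (\<Sum>r\<in>R. image_inner M w (v r))"
    by (rule image_inner_kernel_split[of M h], use ker in blast, unfold w_def v_def, use decomp in blast)
  also have "\<dots> \<le> (\<Sum>r\<in>R. d * (nrm u0 + nrm u1) * nrm (v r))"
    unfolding sum_negf[symmetric] by (rule sum_mono) (rule abs_le_D2[OF cross])
  also have "\<dots> \<le> (\<Sum>r\<in>R. d * (sqrt 2 * nrm w) * nrm (v r))"
    by (intro sum_mono mult_right_mono[OF mult_left_mono[OF u01 d] nrm_nonneg])
  also have "\<dots> = sqrt 2 * d * nrm w * (\<Sum>r\<in>R. nrm (v r))"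
    by (simp add: sum_distrib_left mult_ac)
  finally show ?thesis unfolding nrm_def w_def v_def .
qed

lemma rip_head_energy:
  fixes h :: "nat \<Rightarrow> real"
  assumes rip: "rip M d (2 * s)" and d: "0 \<le> d"
    and ker: "\<And>k. k < dim_row M \<Longrightarrow> mat_apply M h k = 0"
    and T: "T0 \<union> T1 \<subseteq> {..<dim_col M}" "T0 \<inter> T1 = {}" "card T0 \<le> s" "card T1 \<le> s"
    and B: "\<And>r. r \<in> R \<Longrightarrow> B r \<subseteq> {..<dim_col M}" "\<And>r. r \<in> R \<Longrightarrow> B r \<inter> (T0 \<union> T1) = {}"
      "\<And>r. r \<in> R \<Longrightarrow> card (B r) \<le> s"
    and decomp: "\<And>i. i < dim_col M \<Longrightarrow> h i = restrict0 (T0 \<union> T1) h i + (\<Sum>r\<in>R. restrict0 (B r) h i)"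
  shows "(1 - d) * sqrt (sum_sq (dim_col M) (restrict0 (T0 \<union> T1) h))
    \<le> sqrt 2 * d * (\<Sum>r\<in>R. sqrt (sum_sq (dim_col M) (restrict0 (B r) h)))"
proof -
  define w where "w = restrict0 (T0 \<union> T1) h"
  define nw where "nw = sqrt (sum_sq (dim_col M) w)"
  define tail where "tail = (\<Sum>r\<in>R. sqrt (sum_sq (dim_col M) (restrict0 (B r) h)))"
  have nw: "0 \<le> nw" "nw * nw = sum_sq (dim_col M) w" unfolding nw_def by (simp_all add: sum_sq_nonneg)
  have tail: "0 \<le> tail" unfolding tail_def by (intro sum_nonneg) (simp add: sum_sq_nonneg)
  have card01: "card (T0 \<union> T1) \<le> 2 * s" using card_Un_le[of T0 T1] T by linarith
  have w0: "\<forall>i. i \<notin> T0 \<union> T1 \<longrightarrow> w i = 0" unfolding w_def restrict0_def by simp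
  have "((1 - d) * nw) * nw = (1 - d) * sum_sq (dim_col M) w" by (simp only: mult.assoc nw(2))
  also have "\<dots> \<le> image_inner M w w" using rip T(1) card01 w0 unfolding rip_def by blast
  also have "\<dots> \<le> sqrt 2 * d * nw * tail"
    using rip_head_inner_bound[OF rip d ker T B decomp] unfolding w_def nw_def tail_def .
  also have "\<dots> = (sqrt 2 * d * tail) * nw" by (simp add: mult_ac)
  finally have energy: "((1 - d) * nw) * nw \<le> (sqrt 2 * d * tail) * nw" .
  have "(1 - d) * nw \<le> sqrt 2 * d * tail"
  proof (cases "nw = 0")
    case True
    then show ?thesis using d tail by (simp add: mult_nonneg_nonneg)
  next
    case False
    show ?thesis by (rule mult_right_le_imp_le[OF energy]) (use nw(1) False in simp)
  qed
  then show ?thesis unfolding nw_def w_def tail_def .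
qed

lemma rip_null_space_property:
  assumes rip: "rip M d (2 * s)" and s: "0 < s" and d: "0 \<le> d" "d < 1"
  shows "null_space_property M s (sqrt 2 * d / (1 - d))"
  unfolding null_space_property_def
proof (intro allI impI)
  fix h :: "nat \<Rightarrow> real" and T0
  assume ker: "\<forall>k<dim_row M. mat_apply M h k = 0" and T0: "T0 \<subseteq> {..<dim_col M}" "card T0 \<le> s"
  let ?N = "dim_col M"
  define C where "C = {..<?N} - T0"
  have fin: "finite C" unfolding C_def by simp
  obtain K B where part: "decreasing_partition (\<lambda>i. \<bar>h i\<bar>) s C K B"
    using decreasing_partition_exists[OF fin s] by blast
  have B: "disjoint_family B" "(\<Union>k. B k) = C" "\<And>k. card (B k) \<le> s"
    using part unfolding decreasing_partition_def by blast+
  have BC: "B k \<subseteq> C" for k unfolding B(2)[symmetric] by blast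
  have B_sq: "sum_sq ?N (restrict0 (B k) h) = (\<Sum>j\<in>B k. (h j)\<^sup>2)" for k
    using BC by (intro sum_sq_restrict0) (auto simp: C_def)
  have tail_disj: "B (Suc k) \<inter> (T0 \<union> B 0) = {}" for k
    using B(1) BC unfolding disjoint_family_on_def C_def by blast
  define w where "w = restrict0 (T0 \<union> B 0) h"
  have decomp: "h i = w i + (\<Sum>k<K. restrict0 (B (Suc k)) h i)" if "i < ?N" for i
  proof -
    have "disjoint_family_on (\<lambda>k. B (Suc k)) {..<K}" using B(1) unfolding disjoint_family_on_def by auto
    then have "(\<Sum>k<K. restrict0 (B (Suc k)) h i) = restrict0 (C - B 0) h i"
      using sum_restrict0_disjoint[of "{..<K}" "\<lambda>k. B (Suc k)" h i] decreasing_partition_tail[OF part]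
      by simp
    then show ?thesis using that BC[of 0] unfolding w_def restrict0_def C_def by auto
  qed
  have head: "(1 - d) * sqrt (sum_sq ?N w)
      \<le> sqrt 2 * d * (\<Sum>k<K. sqrt (sum_sq ?N (restrict0 (B (Suc k)) h)))"
    unfolding w_def
    by (rule rip_head_energy[OF rip d(1)])
      (use ker T0 BC B(3) tail_disj decomp in \<open>auto simp: w_def C_def\<close>)
  have tail: "(\<Sum>k<K. sqrt (sum_sq ?N (restrict0 (B (Suc k)) h))) \<le> (\<Sum>i\<in>C. \<bar>h i\<bar>) / sqrt s"
    unfolding B_sq using fin s part by (rule tail_blocks_norm_sum)
  have T0_l1: "(\<Sum>i\<in>T0. \<bar>h i\<bar>) \<le> sqrt s * sqrt (sum_sq ?N w)"
    unfolding w_def using T0 BC[of 0] by (intro l1_le_sqrt_sum_sq_restrict0) (auto simp: C_def)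
  have "(1 - d) * sqrt (sum_sq ?N w) \<le> sqrt 2 * d * ((\<Sum>i\<in>C. \<bar>h i\<bar>) / sqrt s)"
    using order_trans[OF head mult_left_mono[OF tail]] d by simp
  then have "sqrt s * ((1 - d) * sqrt (sum_sq ?N w)) \<le> sqrt 2 * d * (\<Sum>i\<in>C. \<bar>h i\<bar>)"
    using s by (simp add: field_simps)
  moreover have "(1 - d) * (\<Sum>i\<in>T0. \<bar>h i\<bar>) \<le> sqrt s * ((1 - d) * sqrt (sum_sq ?N w))"
    using mult_left_mono[OF T0_l1, of "1 - d"] d by (simp add: algebra_simps)
  ultimately show "(\<Sum>i\<in>T0. \<bar>h i\<bar>) \<le> sqrt 2 * d / (1 - d) * (\<Sum>i\<in>{..<?N} - T0. \<bar>h i\<bar>)"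
    using d unfolding C_def by (simp add: field_simps)
qed

lemma mult_mat_vec_eq_mat_apply:
  assumes "v \<in> carrier_vec (dim_col M)" and "k < dim_row M"
  shows "(M *\<^sub>v v) $ k = mat_apply M (\<lambda>j. v $ j) k"
  using assms unfolding mat_apply_def by (simp add: scalar_prod_def lessThan_atLeast0)

lemma mat_apply_diff_eq_0:
  assumes "w \<in> carrier_vec (dim_col M)" "M *\<^sub>v w = M *\<^sub>v x" "x \<in> carrier_vec (dim_col M)"
    and "k < dim_row M"
  shows "mat_apply M (\<lambda>i. w $ i - x $ i) k = 0"
  using mat_apply_lincomb[of M 1 "\<lambda>j. w $ j" "-1" "\<lambda>j. x $ j" k] assms
  by (simp add: mult_mat_vec_eq_mat_apply[symmetric])

lemma null_space_property_l1_less: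
  fixes M :: "real mat" and x w :: "real vec"
  assumes nsp: "null_space_property M s \<rho>" and \<rho>: "\<rho> < 1"
    and x: "x \<in> carrier_vec (dim_col M)" and sparse: "card (supp_vec x) \<le> s"
    and w: "w \<in> carrier_vec (dim_col M)" "M *\<^sub>v w = M *\<^sub>v x" "w \<noteq> x"
  shows "l1_norm x < l1_norm w"
proof -
  let ?N = "dim_col M"
  define h where "h i = w $ i - x $ i" for i
  define T0 where "T0 = supp_vec x"
  define C where "C = {..<?N} - T0"
  have T0: "T0 \<subseteq> {..<?N}" using x unfolding T0_def supp_vec_def by auto
  have x_C: "x $ i = 0" if "i \<in> C" for i using that x unfolding C_def T0_def supp_vec_def by auto
  have "mat_apply M h k = 0" if "k < dim_row M" for k
    unfolding h_def using w(1,2) x that by (rule mat_apply_diff_eq_0)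
  then have nsp_h: "(\<Sum>i\<in>T0. \<bar>h i\<bar>) \<le> \<rho> * (\<Sum>i\<in>C. \<bar>h i\<bar>)"
    using nsp T0 sparse unfolding null_space_property_def C_def T0_def by blast
  have "(\<Sum>i\<in>C. \<bar>h i\<bar>) \<noteq> 0"
  proof
    assume C0: "(\<Sum>i\<in>C. \<bar>h i\<bar>) = 0"
    then have "(\<Sum>i\<in>T0. \<bar>h i\<bar>) = 0" using nsp_h by (simp add: antisym sum_nonneg)
    then have "h i = 0" if "i < ?N" for i
      using C0 that T0 finite_subset[OF T0] unfolding C_def by (auto simp: sum_nonneg_eq_0_iff)
    then have "w = x" using w(1) x unfolding h_def by (intro eq_vecI) auto
    then show False using w(3) by simp
  qed
  then have "0 < (\<Sum>i\<in>C. \<bar>h i\<bar>)" by (simp add: less_le sum_nonneg)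
  then have "\<rho> * (\<Sum>i\<in>C. \<bar>h i\<bar>) < (\<Sum>i\<in>C. \<bar>h i\<bar>)"
    using mult_strict_right_mono[OF \<rho>] by simp
  then have less: "(\<Sum>i\<in>T0. \<bar>h i\<bar>) < (\<Sum>i\<in>C. \<bar>h i\<bar>)" using nsp_h by linarith
  have "l1_norm x = (\<Sum>i\<in>T0. \<bar>x $ i\<bar>)"
    unfolding l1_norm_def using x T0 x_C unfolding C_def by (intro sum.mono_neutral_right) auto
  also have "\<dots> \<le> (\<Sum>i\<in>T0. \<bar>w $ i\<bar>) + (\<Sum>i\<in>T0. \<bar>h i\<bar>)"
    unfolding h_def sum.distrib[symmetric] by (intro sum_mono) auto
  also have "\<dots> < (\<Sum>i\<in>T0. \<bar>w $ i\<bar>) + (\<Sum>i\<in>C. \<bar>w $ i\<bar>)"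
    using less x_C unfolding h_def by simp
  also have "\<dots> = l1_norm w"
    unfolding l1_norm_def C_def using w(1) sum.subset_diff[OF T0, of "\<lambda>i. \<bar>w $ i\<bar>"]
    by (simp add: add.commute)
  finally show ?thesis .
qed

lemma null_space_property_l1_recovery:
  fixes M :: "real mat" and x :: "real vec"
  assumes "null_space_property M s \<rho>" and "\<rho> < 1"
    and x: "x \<in> carrier_vec (dim_col M)" and "card (supp_vec x) \<le> s"
  shows "l1_argmin M (M *\<^sub>v x) = {x}"
proof -
  have less: "l1_norm x < l1_norm w"
    if "w \<in> carrier_vec (dim_col M)" "M *\<^sub>v w = M *\<^sub>v x" "w \<noteq> x" for w
    using null_space_property_l1_less[OF assms that] .
  show ?thesis
    unfolding l1_argmin_def using x less by (auto simp: not_less[symmetric]) (metis less_asym less_irrefl)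
qed

lemma sq_norm_eq_sum_sq: "v \<in> carrier_vec N \<Longrightarrow> sq_norm v = sum_sq N (\<lambda>j. v $ j)"
  unfolding sq_norm_def sum_sq_def by simp

lemma sq_norm_mult_mat_vec:
  assumes "v \<in> carrier_vec (dim_col M)"
  shows "sq_norm (M *\<^sub>v v) = image_inner M (\<lambda>j. v $ j) (\<lambda>j. v $ j)"
  unfolding sq_norm_def image_inner_def dim_mult_mat_vec
  by (intro sum.cong) (simp_all add: mult_mat_vec_eq_mat_apply[OF assms] power2_eq_square del: index_mult_mat_vec)

lemma sq_norm_mult_mat_vec_le:
  assumes v: "v \<in> carrier_vec (dim_col M)"
  shows "sq_norm (M *\<^sub>v v) \<le> (\<Sum>k<dim_row M. \<Sum>j<dim_col M. (M $$ (k, j))\<^sup>2) * sq_norm v"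
proof -
  have "sq_norm (M *\<^sub>v v) = (\<Sum>k<dim_row M. (\<Sum>j<dim_col M. M $$ (k, j) * v $ j)\<^sup>2)"
    unfolding sq_norm_mult_mat_vec[OF v] image_inner_def mat_apply_def by (simp add: power2_eq_square)
  also have "\<dots> \<le> (\<Sum>k<dim_row M. (\<Sum>j<dim_col M. (M $$ (k, j))\<^sup>2) * sq_norm v)"
    unfolding sq_norm_eq_sum_sq[OF v] sum_sq_def by (intro sum_mono Cauchy_Schwarz_ineq_sum)
  finally show ?thesis by (simp add: sum_distrib_right)
qed

lemma rip_if_sparse_bounds:
  assumes bounds: "\<forall>x \<in> carrier_vec (dim_col M). card (supp_vec x) \<le> S \<longrightarrow>
       (1 - d) * sq_norm x \<le> sq_norm (M *\<^sub>v x) \<and> sq_norm (M *\<^sub>v x) \<le> (1 + d) * sq_norm x"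
  shows "rip M d S"
  unfolding rip_def
proof (intro allI impI)
  fix z :: "nat \<Rightarrow> real" and T
  assume T: "T \<subseteq> {..<dim_col M}" "card T \<le> S" and z: "\<forall>i. i \<notin> T \<longrightarrow> z i = 0"
  define x where "x = vec (dim_col M) z"
  have x: "x \<in> carrier_vec (dim_col M)" unfolding x_def by simp
  have "supp_vec x \<subseteq> T" using z unfolding x_def supp_vec_def by auto
  then have "card (supp_vec x) \<le> card T" by (rule card_mono[OF finite_subset[OF T(1) finite_lessThan]])
  then have "card (supp_vec x) \<le> S" using T(2) by linarith
  moreover have "sq_norm x = sum_sq (dim_col M) z"
    using sq_norm_eq_sum_sq[OF x] by (simp add: x_def sum_sq_def)
  moreover have "sq_norm (M *\<^sub>v x) = image_inner M z z"
  proof -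
    have "mat_apply M (\<lambda>j. x $ j) k = mat_apply M z k" for k
      unfolding x_def by (rule mat_apply_cong) simp
    then show ?thesis unfolding sq_norm_mult_mat_vec[OF x] image_inner_def by simp
  qed
  ultimately show "(1 - d) * sum_sq (dim_col M) z \<le> image_inner M z z \<and>
      image_inner M z z \<le> (1 + d) * sum_sq (dim_col M) z"
    using bounds x by auto
qed

lemma rip_mono:
  assumes "rip M d S" and "d \<le> d'"
  shows "rip M d' S"
proof -
  have "(1 - d') * q \<le> (1 - d) * q" "(1 + d) * q \<le> (1 + d') * q" if "0 \<le> q" for q :: real
    using that assms(2) by (auto intro: mult_right_mono)
  then show ?thesis using assms(1) sum_sq_nonneg unfolding rip_def by (meson order_trans)
qed

lemma ric_less_imp_rip:
  assumes "ric S M < e" and "0 < e"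
  obtains d where "0 \<le> d" "d < e" "rip M d S"
proof -
  define D where "D = {d. \<forall>x \<in> carrier_vec (dim_col M). card (supp_vec x) \<le> S \<longrightarrow>
       (1 - d) * sq_norm x \<le> sq_norm (M *\<^sub>v x) \<and> sq_norm (M *\<^sub>v x) \<le> (1 + d) * sq_norm x}"
  define c where "c = (\<Sum>k<dim_row M. \<Sum>j<dim_col M. (M $$ (k, j))\<^sup>2)"
  have "max 1 c \<in> D"
    unfolding D_def
  proof (intro CollectI ballI impI conjI)
    fix x :: "real vec" assume x: "x \<in> carrier_vec (dim_col M)"
    have nonneg: "0 \<le> sq_norm x" "0 \<le> sq_norm (M *\<^sub>v x)" unfolding sq_norm_def by (auto intro: sum_nonneg)
    have "(1 - max 1 c) * sq_norm x \<le> 0" using nonneg by (intro mult_nonpos_nonneg) auto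
    then show "(1 - max 1 c) * sq_norm x \<le> sq_norm (M *\<^sub>v x)" using nonneg by linarith
    have "c * sq_norm x \<le> (1 + max 1 c) * sq_norm x" using nonneg by (intro mult_right_mono) auto
    then show "sq_norm (M *\<^sub>v x) \<le> (1 + max 1 c) * sq_norm x"
      using sq_norm_mult_mat_vec_le[OF x] unfolding c_def by linarith
  qed
  then obtain d where "d \<in> D" "d < e"
    using cInf_lessD[of D e] assms(1) unfolding ric_def D_def[symmetric] by blast
  then have "rip M d S" using rip_if_sparse_bounds unfolding D_def by blast
  then have "rip M (max d 0) S" by (rule rip_mono) simp
  then show thesis using that[of "max d 0"] \<open>d < e\<close> assms(2) by simp
qed

lemma ric_l1_recovery:
  fixes M :: "real mat" and x :: "real vec"
  assumes ric: "ric (2 * s) M < sqrt 2 - 1" and s: "0 < s"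
    and x: "x \<in> carrier_vec (dim_col M)" and sparse: "card (supp_vec x) \<le> s"
  shows "l1_argmin M (M *\<^sub>v x) = {x}"
proof -
  obtain d where d: "0 \<le> d" "d < sqrt 2 - 1" "rip M d (2 * s)"
    using ric_less_imp_rip[OF ric] by force
  have "sqrt 2 < 2" by (rule real_less_lsqrt) auto
  then have d1: "d < 1" using d(2) by linarith
  have "(sqrt 2 + 1) * d < (sqrt 2 + 1) * (sqrt 2 - 1)"
    using d(2) by (intro mult_strict_left_mono add_nonneg_pos) auto
  also have "\<dots> = 1" by (simp add: algebra_simps)
  finally have "sqrt 2 * d / (1 - d) < 1" using d1 by (simp add: field_simps)
  then show ?thesis
    using null_space_property_l1_recovery[OF rip_null_space_property[OF d(3) s d(1) d1] _ x sparse]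
    by blast
qed

section \<open>Pinched trajectories of the network\<close>

lemma traj_0 [simp]: "traj N f h A x0 0 = x0"
  unfolding traj_def by simp

lemma traj_Suc [simp]: "traj N f h A x0 (Suc t) = net_step N f h A (traj N f h A x0 t)"
  unfolding traj_def by simp

lemma net_step_support_subset:
  fixes A :: "nat \<Rightarrow> nat \<Rightarrow> real" and x :: "nat \<Rightarrow> real" and N :: nat
  defines "S \<equiv> {i. i < N \<and> x i \<noteq> 0}"
  assumes adj01: "\<forall>i<N. \<forall>j<N. A i j = 0 \<or> A i j = 1"
    and f0: "\<forall>i<N. f i 0 = 0" and h00: "\<forall>i<N. \<forall>j<N. h i j 0 0 = 0"
  shows "{i. i < N \<and> net_step N f h A x i \<noteq> 0} \<subseteq> S \<union> (\<Union>j\<in>S. first_level N A j)"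
proof
  fix i assume "i \<in> {i. i < N \<and> net_step N f h A x i \<noteq> 0}"
  then have i: "i < N" "net_step N f h A x i \<noteq> 0" by auto
  show "i \<in> S \<union> (\<Union>j\<in>S. first_level N A j)"
  proof (rule ccontr)
    assume out: "i \<notin> S \<union> (\<Union>j\<in>S. first_level N A j)"
    then have xi: "x i = 0" using i(1) unfolding S_def by auto
    have "(\<Sum>j<N. A i j * h i j (x i) (x j)) = 0"
    proof (rule sum.neutral, intro ballI)
      fix j assume j: "j \<in> {..<N}"
      show "A i j * h i j (x i) (x j) = 0"
      proof (cases "x j = 0")
        case True
        then show ?thesis using xi h00 i(1) j by simp
      next
        case False
        then have "A i j \<noteq> 1" using out i(1) j unfolding S_def first_level_def by auto
        then show ?thesis using adj01 i(1) j by auto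
      qed
    qed
    then have "net_step N f h A x i = 0" using i(1) xi f0 unfolding net_step_def by simp
    then show False using i(2) by simp
  qed
qed

lemma card_net_step_support:
  fixes A :: "nat \<Rightarrow> nat \<Rightarrow> real"
  assumes adj01: "\<forall>i<N. \<forall>j<N. A i j = 0 \<or> A i j = 1"
    and f0: "\<forall>i<N. f i 0 = 0" and h00: "\<forall>i<N. \<forall>j<N. h i j 0 0 = 0"
  shows "card {i. i < N \<and> net_step N f h A x i \<noteq> 0}
    \<le> (max_out_deg N A + 1) * card {i. i < N \<and> x i \<noteq> 0}"
proof -
  define S where "S = {i. i < N \<and> x i \<noteq> 0}"
  have fin: "finite S" "finite (S \<union> (\<Union>j\<in>S. first_level N A j))"
    unfolding S_def first_level_def by auto
  have deg: "card (first_level N A j) \<le> max_out_deg N A" if "j \<in> S" for j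
  proof -
    have "out_deg N A j \<le> max_out_deg N A"
      unfolding max_out_deg_def using that by (intro Max_ge) (auto simp: S_def)
    then show ?thesis unfolding out_deg_def first_level_def .
  qed
  have "card {i. i < N \<and> net_step N f h A x i \<noteq> 0} \<le> card (S \<union> (\<Union>j\<in>S. first_level N A j))"
    using net_step_support_subset[where f = f and h = h, OF assms] fin(2) unfolding S_def by (rule card_mono[rotated])
  also have "\<dots> \<le> card S + (\<Sum>j\<in>S. card (first_level N A j))"
    using card_Un_le[of S "\<Union>j\<in>S. first_level N A j"] card_UN_le[OF fin(1), of "first_level N A"]
    by linarith
  also have "\<dots> \<le> card S + card S * max_out_deg N A"
    using sum_mono[of S _ "\<lambda>_. max_out_deg N A", OF deg] by simp
  finally show ?thesis unfolding S_def by (simp add: algebra_simps)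
qed

lemma card_traj_pinch_support:
  fixes A :: "nat \<Rightarrow> nat \<Rightarrow> real"
  assumes adj01: "\<forall>i<N. \<forall>j<N. A i j = 0 \<or> A i j = 1"
    and f0: "\<forall>i<N. f i 0 = 0" and h00: "\<forall>i<N. \<forall>j<N. h i j 0 0 = 0"
  shows "card {i. i < N \<and> traj N f h A (pinch e q) t i \<noteq> 0} \<le> (max_out_deg N A + 1) ^ t"
proof (induction t)
  case 0
  have "{i. i < N \<and> pinch e q i \<noteq> 0} \<subseteq> {q}" unfolding pinch_def by auto
  then show ?case using card_mono[of "{q}"] by fastforce
next
  case (Suc t)
  have "card {i. i < N \<and> traj N f h A (pinch e q) (Suc t) i \<noteq> 0}
      \<le> (max_out_deg N A + 1) * card {i. i < N \<and> traj N f h A (pinch e q) t i \<noteq> 0}"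
    using card_net_step_support[where f = f and h = h and x = "traj N f h A (pinch e q) t", OF assms]
    by simp
  also have "\<dots> \<le> (max_out_deg N A + 1) * (max_out_deg N A + 1) ^ t"
    using Suc.IH by (rule mult_le_mono2)
  finally show ?case by simp
qed

lemma traj_pinch_one:
  assumes f0: "\<forall>i<N. f i 0 = 0" and h00: "\<forall>i<N. \<forall>j<N. h i j 0 0 = 0"
    and q: "q < N" and i: "i < N" "i \<noteq> q"
  shows "traj N f h A (pinch e q) 1 i = A i q * h i q 0 e"
proof -
  have "(\<Sum>j<N. A i j * h i j (pinch e q i) (pinch e q j))
      = (\<Sum>j<N. if j = q then A i q * h i q 0 e else 0)"
    using i h00 unfolding pinch_def by (intro sum.cong) auto
  then show ?thesis using q i f0 unfolding One_nat_def traj_Suc traj_0 net_step_def pinch_def by simp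
qed

lemma first_step_support:
  fixes A :: "nat \<Rightarrow> nat \<Rightarrow> real"
  assumes adj01: "\<forall>i<N. \<forall>j<N. A i j = 0 \<or> A i j = 1" and noloop: "\<forall>i<N. A i i = 0"
    and f0: "\<forall>i<N. f i 0 = 0"
    and h: "\<forall>i<N. \<forall>j<N. h i j 0 0 = 0 \<and> (\<forall>v. 0 < \<bar>v\<bar> \<and> \<bar>v\<bar> < \<delta> \<longrightarrow> h i j 0 v \<noteq> 0)"
    and q: "q < N" and e: "0 < \<bar>e\<bar>" "\<bar>e\<bar> < \<delta>"
  shows "{i. i < N \<and> traj N f h A (pinch e q) 1 i \<noteq> 0} - {q} = first_level N A q"
proof -
  have "traj N f h A (pinch e q) 1 i \<noteq> 0 \<longleftrightarrow> A i q = 1" if i: "i < N" "i \<noteq> q" for i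
    using traj_pinch_one[where f = f and h = h and A = A and e = e, OF f0 _ q i] h adj01 q i e by auto
  moreover have "i \<noteq> q" if "i < N" "A i q = 1" for i using that noloop by auto
  ultimately show ?thesis unfolding first_level_def by auto
qed

lemma Psi_mat_mult_coeffs:
  assumes "\<And>q t. q < N \<Longrightarrow> X q (Suc t) i = (\<Sum>l<si. cf l * psi_i l (X q t))"
  shows "Psi_mat N smax si X psi_i *\<^sub>v vec si cf = b_vec N smax X i"
proof (rule eq_vecI)
  fix r assume "r < dim_vec (b_vec N smax X i)"
  then have r: "r < N * smax" by (simp add: b_vec_def)
  then have "r div smax < N" by (simp add: less_mult_imp_div_less)
  then show "(Psi_mat N smax si X psi_i *\<^sub>v vec si cf) $ r = b_vec N smax X i $ r"
    using r assms[of "r div smax" "r mod smax"] unfolding Psi_mat_def b_vec_def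
    by (simp add: scalar_prod_def lessThan_atLeast0 mult.commute)
qed (simp add: Psi_mat_def b_vec_def)

lemma pinched_state_l1_recovery:
  fixes A :: "nat \<Rightarrow> nat \<Rightarrow> real" and phi :: "real mat"
  assumes adj01: "\<forall>i<N. \<forall>j<N. A i j = 0 \<or> A i j = 1"
    and f0: "\<forall>i<N. f i 0 = 0" and h00: "\<forall>i<N. \<forall>j<N. h i j 0 0 = 0"
    and phi: "phi \<in> carrier_mat P N"
    and ric: "ric (2 * (max_out_deg N A + 1) ^ T) phi < sqrt 2 - 1" and t: "t \<le> T"
  shows "l1_argmin phi (phi *\<^sub>v vec N (traj N f h A (pinch e q) t))
    = {vec N (traj N f h A (pinch e q) t)}"
proof (rule ric_l1_recovery[OF ric])
  let ?x = "traj N f h A (pinch e q) t"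
  have "card {i. i < N \<and> ?x i \<noteq> 0} \<le> (max_out_deg N A + 1) ^ t"
    by (rule card_traj_pinch_support[where f = f and h = h, OF adj01 f0 h00])
  also have "\<dots> \<le> (max_out_deg N A + 1) ^ T" using t by (intro power_increasing) auto
  also have "{i. i < N \<and> ?x i \<noteq> 0} = supp_vec (vec N ?x)" unfolding supp_vec_def by auto
  finally show "card (supp_vec (vec N ?x)) \<le> (max_out_deg N A + 1) ^ T" .
  show "vec N ?x \<in> carrier_vec (dim_col phi)" using phi by simp
qed simp

lemma model_coefficients_least_squares:
  assumes model: "\<And>i q t. i < N \<Longrightarrow> q < N \<Longrightarrow> X q (Suc t) i = (\<Sum>l<s i. c i l * psi i l (X q t))"
    and rank: "\<And>i. i < N \<Longrightarrow> vec_space.rank (N * smax) (Psi_mat N smax (s i) X (psi i)) = s i"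
  shows "\<forall>i<N.
            {cv \<in> carrier_vec (s i). Psi_mat N smax (s i) X (psi i) *\<^sub>v cv = b_vec N smax X i}
              = {vec (s i) (c i)}
          \<and> vec (s i) (c i) = pinv (Psi_mat N smax (s i) X (psi i)) *\<^sub>v b_vec N smax X i
          \<and> (\<exists>B. mat_inverse (transpose_mat (Psi_mat N smax (s i) X (psi i)) * Psi_mat N smax (s i) X (psi i)) = Some B
               \<and> vec (s i) (c i) = (B * transpose_mat (Psi_mat N smax (s i) X (psi i))) *\<^sub>v b_vec N smax X i)"
proof -
  have Psi: "Psi_mat N smax (s i) X (psi i) \<in> carrier_mat (N * smax) (s i)" for i
    by (simp add: Psi_mat_def)
  have coeffs: "Psi_mat N smax (s i) X (psi i) *\<^sub>v vec (s i) (c i) = b_vec N smax X i" if "i < N" for i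
    using model[OF that] by (rule Psi_mat_mult_coeffs)
  show ?thesis using full_rank_least_squares[OF Psi rank vec_carrier coeffs] by blast
qed

theorem mainTheorem5:
  fixes N P :: nat
    and f :: "nat \<Rightarrow> real \<Rightarrow> real"
    and h :: "nat \<Rightarrow> nat \<Rightarrow> real \<Rightarrow> real \<Rightarrow> real"
    and A :: "nat \<Rightarrow> nat \<Rightarrow> real"
    and \<delta> :: real
    and s :: "nat \<Rightarrow> nat"
    and psi :: "nat \<Rightarrow> nat \<Rightarrow> (nat \<Rightarrow> real) \<Rightarrow> real"
    and c :: "nat \<Rightarrow> nat \<Rightarrow> real"
    and eps :: "nat \<Rightarrow> real"
    and phi :: "nat \<Rightarrow> real mat"
  defines "smax \<equiv> Max (s ` {..<N})"
      and "X \<equiv> (\<lambda>q t. traj N f h A (pinch (eps q) q) t)"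
  assumes adj01: "\<forall>i<N. \<forall>j<N. A i j = 0 \<or> A i j = 1"
      and noloop: "\<forall>i<N. A i i = 0"
      and assm1: "\<forall>i<N. f i 0 = 0"
      and delta_pos: "\<delta> > 0"
      and assm2: "\<forall>i<N. \<forall>j<N. h i j 0 0 = 0 \<and> (\<forall>v. 0 < \<bar>v\<bar> \<and> \<bar>v\<bar> < \<delta> \<longrightarrow> h i j 0 v \<noteq> 0)"
      and coeff_nz: "\<forall>i<N. \<forall>l<s i. c i l \<noteq> 0"
      and model: "\<forall>i<N. \<forall>x0 t. (\<forall>k. N \<le> k \<longrightarrow> x0 k = 0) \<longrightarrow>
                    traj N f h A x0 (Suc t) i = (\<Sum>l<s i. c i l * psi i l (traj N f h A x0 t))"
      and pinching: "\<forall>q<N. 0 < \<bar>eps q\<bar> \<and> \<bar>eps q\<bar> < \<delta>"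
      and rank: "\<forall>i<N. vec_space.rank (N * smax) (Psi_mat N smax (s i) X (psi i)) = s i"
      and phi_dim: "\<forall>q<N. phi q \<in> carrier_mat P N"
      and phi_rip: "\<forall>q<N. ric (2 * (max_out_deg N A + 1) ^ smax) (phi q) < sqrt 2 - 1"
  shows "(\<forall>q<N. \<forall>t\<in>{1..smax}.
            l1_argmin (phi q) (phi q *\<^sub>v vec N (X q t)) = {vec N (X q t)})
       \<and> (\<forall>q<N. {i. i < N \<and> X q 1 i \<noteq> 0} - {q} = first_level N A q)
       \<and> (\<forall>i<N.
            {cv \<in> carrier_vec (s i). Psi_mat N smax (s i) X (psi i) *\<^sub>v cv = b_vec N smax X i}
              = {vec (s i) (c i)}
          \<and> vec (s i) (c i) = pinv (Psi_mat N smax (s i) X (psi i)) *\<^sub>v b_vec N smax X i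
          \<and> (\<exists>B. mat_inverse (transpose_mat (Psi_mat N smax (s i) X (psi i)) * Psi_mat N smax (s i) X (psi i)) = Some B
               \<and> vec (s i) (c i) = (B * transpose_mat (Psi_mat N smax (s i) X (psi i))) *\<^sub>v b_vec N smax X i))"
proof -
  have h00: "\<forall>i<N. \<forall>j<N. h i j 0 0 = 0" using assm2 by blast
  have recovery: "l1_argmin (phi q) (phi q *\<^sub>v vec N (X q t)) = {vec N (X q t)}"
    if "q < N" "t \<in> {1..smax}" for q t
    unfolding X_def
    by (rule pinched_state_l1_recovery[where f = f and h = h, OF adj01 assm1 h00])
      (use that phi_dim phi_rip in auto)
  have support: "{i. i < N \<and> X q 1 i \<noteq> 0} - {q} = first_level N A q" if "q < N" for q
    unfolding X_def
    by (rule first_step_support[where f = f and h = h, OF adj01 noloop assm1 assm2])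
      (use that pinching in auto)
  have model_X: "X q (Suc t) i = (\<Sum>l<s i. c i l * psi i l (X q t))" if "i < N" "q < N" for i q t
    using model that unfolding X_def pinch_def by simp
  show ?thesis
    using recovery support rank
      model_coefficients_least_squares[where X = X and s = s and c = c and psi = psi, OF model_X]
    by blast
qed

end
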